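(* Let $\mu$ be a monotone system over $\{0,1\}^V$, $\theta\in(0,1)$, $T_1,T_2\ge1$. Let $\pi^{(t)}_{\mathrm{alg}}$ be the law of $X^{(t)}_{\mathrm{alg}}$ (generated by $\mathcal A_\mu(\theta,T_1,T_2)$) and $\pi^{(t)}_{\mathrm{GD}}$ the law of $X^{(t)}_{\pi\text{-GD}}$, the Glauber dynamics on $\pi$ started from $X^{(0)}_{\pi\text{-GD}}=\mathsf{lift}(\mathbf 1_V)$. Then for every $t\ge0$ (with $t\le T_1T_2$), $\pi^{(t)}_{\mathrm{GD}}\preceq_{\mathrm{sd}}\pi^{(t)}_{\mathrm{alg}}$.
   Context: Monotone system: for every $v$ and all feasible $\sigma\preceq\tau$ in $\{0,1\}^{V\setminus\{v\}}$ (coordinatewise order), $\mu^\sigma_v(1)\le\mu^\tau_v(1)$. Tilted $(\theta*\mu)(\sigma)\propto\mu(\sigma)\theta^{\|\sigma\|_1}$. $\mathsf{lift}$: random map $\{0,1\}^V\to\{0,1,\star\}^V$, independently per coordinate $0\mapsto0$, $1\mapsto\star$ w.p. $1-\theta$, $1\mapsto1$ w.p. $\theta$. $\mathsf{contr}$: $0\mapsto0$, $1,\star\mapsto1$. $\pi$ is the law of $\mathsf{lift}(X)$ for $X\sim\mu$. Glauber dynamics on $\pi$: pick $v$ uniformly, resample $X_v\in\{0,1,\star\}$ from $\pi$ conditioned on $X_{V\setminus\{v\}}$. On $\{0,1,\star\}^V$ use the order $0<1<\star$ and the coordinatewise partial order; $\nu\preceq_{\mathrm{sd}}\nu'$ means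 there is a coupling $(X,Y)$ with $X\sim\nu$, $Y\sim\nu'$, $X\preceq Y$ a.s. Algorithm $\mathcal A_\mu(\theta,T_1,T_2)$: set $X=\mathsf{lift}(\mathbf 1_V)$; repeat $T_1$ times: (a) $X\gets\mathsf{contr}(X)$; (b) $X\gets\mathsf{lift}(X)$, $S=\{v:X_v\ne\star\}$; (c) repeat $T_2$ times: pick $v$ uniformly; if $v\in S$ resample $X_v\sim(\theta*\mu)_v^{\sigma_{V\setminus\{v\}}}$ with $\sigma=\mathsf{contr}(X)$, else keep $X_v=\star$. $X^{(0)}_{\mathrm{alg}}=\mathsf{lift}(\mathbf 1_V)$, $X^{(t)}_{\mathrm{alg}}$ the state after the $t$-th single-site step of (c). *)

theory Defs
  imports "HOL-Probability.Probability"
begin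

datatype spin = Zero | One | Star

fun spin_rank :: "spin \<Rightarrow> nat" where
  "spin_rank Zero = 0" | "spin_rank One = 1" | "spin_rank Star = 2"

instantiation spin :: linorder
begin
definition less_eq_spin :: "spin \<Rightarrow> spin \<Rightarrow> bool" where
  "less_eq_spin x y \<longleftrightarrow> spin_rank x \<le> spin_rank y"
definition less_spin :: "spin \<Rightarrow> spin \<Rightarrow> bool" where
  "less_spin x y \<longleftrightarrow> spin_rank x < spin_rank y"
instance
proof
  fix x y :: spin
  show "x \<le> y \<Longrightarrow> y \<le> x \<Longrightarrow> x = y"
    by (cases x; cases y) (auto simp: less_eq_spin_def)
qed (auto simp: less_eq_spin_def less_spin_def)
end

text \<open>Configurations on the finite vertex set V (= UNIV of the finite type 'v):
  'v \<Rightarrow> bool is {0,1}^V (False = 0, True = 1; the order on bool is 0 < 1),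
  'v \<Rightarrow> spin is {0,1,star}^V.\<close>

definition cyl :: "'v \<Rightarrow> ('v \<Rightarrow> 'a) \<Rightarrow> ('v \<Rightarrow> 'a) set" where
  "cyl v \<sigma> = {x. \<forall>u. u \<noteq> v \<longrightarrow> x u = \<sigma> u}"

definition feasible :: "('v \<Rightarrow> 'a) pmf \<Rightarrow> 'v \<Rightarrow> ('v \<Rightarrow> 'a) \<Rightarrow> bool" where
  "feasible p v \<sigma> \<longleftrightarrow> measure_pmf.prob p (cyl v \<sigma>) > 0"

text \<open>Law of X_v under p conditioned on X_{V-{v}} = \<sigma>_{V-{v}}
  (convention when infeasible: point mass at \<sigma> v; never used on reachable states).\<close>
definition cond_site :: "('v \<Rightarrow> 'a) pmf \<Rightarrow> 'v \<Rightarrow> ('v \<Rightarrow> 'a) \<Rightarrow> 'a pmf" where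
  "cond_site p v \<sigma> =
     (if feasible p v \<sigma> then map_pmf (\<lambda>x. x v) (cond_pmf p (cyl v \<sigma>)) else return_pmf (\<sigma> v))"

definition cond_one :: "('v \<Rightarrow> bool) pmf \<Rightarrow> 'v \<Rightarrow> ('v \<Rightarrow> bool) \<Rightarrow> real" where
  "cond_one \<mu> v \<sigma> = measure_pmf.prob \<mu> {x \<in> cyl v \<sigma>. x v} / measure_pmf.prob \<mu> (cyl v \<sigma>)"

definition monotone_system :: "('v \<Rightarrow> bool) pmf \<Rightarrow> bool" where
  "monotone_system \<mu> \<longleftrightarrow>
     (\<forall>v \<sigma> \<tau>. feasible \<mu> v \<sigma> \<and> feasible \<mu> v \<tau> \<and> (\<forall>u. u \<noteq> v \<longrightarrow> \<sigma> u \<le> \<tau> u)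
        \<longrightarrow> cond_one \<mu> v \<sigma> \<le> cond_one \<mu> v \<tau>)"

definition tilt :: "real \<Rightarrow> ('v::finite \<Rightarrow> bool) pmf \<Rightarrow> ('v \<Rightarrow> bool) pmf" where
  "tilt \<theta> \<mu> = embed_pmf (\<lambda>\<sigma>. pmf \<mu> \<sigma> * \<theta> ^ card {v. \<sigma> v} /
       (\<Sum>\<tau>\<in>UNIV. pmf \<mu> \<tau> * \<theta> ^ card {v. \<tau> v}))"

definition lift :: "real \<Rightarrow> ('v::finite \<Rightarrow> bool) \<Rightarrow> ('v \<Rightarrow> spin) pmf" where
  "lift \<theta> x = Pi_pmf UNIV Zero (\<lambda>v. if x v
       then map_pmf (\<lambda>b. if b then One else Star) (bernoulli_pmf \<theta>)
       else return_pmf Zero)"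

definition contr :: "('v \<Rightarrow> spin) \<Rightarrow> ('v \<Rightarrow> bool)" where
  "contr X = (\<lambda>v. X v \<noteq> Zero)"

definition lifted :: "real \<Rightarrow> ('v::finite \<Rightarrow> bool) pmf \<Rightarrow> ('v \<Rightarrow> spin) pmf" where
  "lifted \<theta> \<mu> = bind_pmf \<mu> (lift \<theta>)"

definition gd_step :: "('v::finite \<Rightarrow> 'a) pmf \<Rightarrow> ('v \<Rightarrow> 'a) \<Rightarrow> ('v \<Rightarrow> 'a) pmf" where
  "gd_step p X = bind_pmf (pmf_of_set UNIV) (\<lambda>v. map_pmf (\<lambda>a. X(v := a)) (cond_site p v X))"

fun gd_law :: "('v::finite \<Rightarrow> 'a) pmf \<Rightarrow> ('v \<Rightarrow> 'a) pmf \<Rightarrow> nat \<Rightarrow> ('v \<Rightarrow> 'a) pmf" where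
  "gd_law p X0 0 = X0"
| "gd_law p X0 (Suc t) = bind_pmf (gd_law p X0 t) (gd_step p)"

text \<open>One single-site step of (c). During a round, S = {v. X v \<noteq> Star} throughout
  (resampled sites get values in {0,1}, sites outside S stay star).\<close>
definition alg_step :: "real \<Rightarrow> ('v::finite \<Rightarrow> bool) pmf \<Rightarrow> ('v \<Rightarrow> spin) \<Rightarrow> ('v \<Rightarrow> spin) pmf" where
  "alg_step \<theta> \<mu> X = bind_pmf (pmf_of_set UNIV) (\<lambda>v.
     if X v = Star then return_pmf X
     else map_pmf (\<lambda>b. X(v := (if b then One else Zero))) (cond_site (tilt \<theta> \<mu>) v (contr X)))"

text \<open>Steps (a)+(b) at the start of a round.\<close>
definition alg_refresh :: "real \<Rightarrow> ('v::finite \<Rightarrow> spin) \<Rightarrow> ('v \<Rightarrow> spin) pmf" where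
  "alg_refresh \<theta> X = lift \<theta> (contr X)"

text \<open>Law of X^(t)_alg: state after the t-th single-site step; the (t+1)-th step is the first
  step of a new round iff t mod T2 = 0, in which case (a),(b) are performed before it.\<close>
fun alg_law :: "real \<Rightarrow> ('v::finite \<Rightarrow> bool) pmf \<Rightarrow> nat \<Rightarrow> nat \<Rightarrow> ('v \<Rightarrow> spin) pmf" where
  "alg_law \<theta> \<mu> T2 0 = lift \<theta> (\<lambda>_. True)"
| "alg_law \<theta> \<mu> T2 (Suc t) = bind_pmf (alg_law \<theta> \<mu> T2 t) (\<lambda>X.
     if t mod T2 = 0 then bind_pmf (alg_refresh \<theta> X) (alg_step \<theta> \<mu>) else alg_step \<theta> \<mu> X)"

end

theory Submission
  imports Defs
begin

(*
  Let G_t be the law of the Glauber dynamics on mu started at the all-ones state. Lifting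
  commutes with single-site Glauber updates, so the Glauber dynamics on pi at time t has law
  lift(G_t); and since mu is monotone, G_t has an increasing density with respect to mu.
  Condition on all spins but the updated one, at site v: the pi-update draws the new spin as the
  lift of mu's conditional at v, while a step of the algorithm from lift(G_t) keeps the lift of
  G_t's conditional if it is a star and otherwise resamples it from the tilted conditional. The
  increasing density makes G_t's conditional put more weight on 1 than mu's, which gives a
  coupling of the two spins in the order 0 < 1 < star. The refresh (a)-(b) leaves lift(G_t)
  invariant and the algorithm's steps are monotone on states whose contraction lies in the
  support of mu, so the domination propagates by induction on t.
*)

section \<open>Spins, the lift map and single-site conditionals\<close>

lemma UNIV_spin: "(UNIV :: spin set) = {Zero, One, Star}"
  using spin.exhaust by auto

instance spin :: finite
  by standard (simp add: UNIV_spin)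

lemma sum_UNIV_spin: "(\<Sum>a\<in>UNIV. f a) = f Zero + f One + (f Star :: 'a::comm_monoid_add)"
  by (simp add: UNIV_spin add.assoc)

lemma Zero_le_spin [simp]: "Zero \<le> (a :: spin)"
  by (cases a) (auto simp: less_eq_spin_def)

lemma spin_le_Star [simp]: "(a :: spin) \<le> Star"
  by (cases a) (auto simp: less_eq_spin_def)

lemma spin_le_Zero_iff [simp]: "(a :: spin) \<le> Zero \<longleftrightarrow> a = Zero"
  by (cases a) (auto simp: less_eq_spin_def)

lemma Star_le_spin_iff [simp]: "Star \<le> (a :: spin) \<longleftrightarrow> a = Star"
  by (cases a) (auto simp: less_eq_spin_def)

definition spin_of_bool :: "bool \<Rightarrow> spin" where
  "spin_of_bool b = (if b then One else Zero)"

definition lift_spin :: "real \<Rightarrow> bool \<Rightarrow> spin pmf" where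
  "lift_spin \<theta> b = (if b then map_pmf (\<lambda>c. if c then One else Star) (bernoulli_pmf \<theta>) else return_pmf Zero)"

lemma lift_eq_Pi_pmf: "lift \<theta> x = Pi_pmf UNIV Zero (\<lambda>v. lift_spin \<theta> (x v))"
  by (simp add: lift_def lift_spin_def)

lemma pmf_lift_spin:
  assumes "0 \<le> \<theta>" "\<theta> \<le> 1"
  shows "pmf (lift_spin \<theta> b) a =
    (if b then (if a = One then \<theta> else if a = Star then 1 - \<theta> else 0) else of_bool (a = Zero))"
proof -
  let ?f = "\<lambda>c. if c then One else Star"
  have inj: "inj ?f" by (auto simp: inj_def)
  have "pmf (map_pmf ?f (bernoulli_pmf \<theta>)) (?f c) = pmf (bernoulli_pmf \<theta>) c" for c
    by (rule pmf_map_inj'[OF inj])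
  from this[of True] this[of False]
  have "pmf (map_pmf ?f (bernoulli_pmf \<theta>)) One = \<theta>" "pmf (map_pmf ?f (bernoulli_pmf \<theta>)) Star = 1 - \<theta>"
    using assms by simp_all
  moreover have "pmf (map_pmf ?f (bernoulli_pmf \<theta>)) Zero = 0"
    by (rule pmf_map_outside) auto
  ultimately show ?thesis
    by (cases b; cases a) (simp_all add: lift_spin_def)
qed

lemma set_pmf_lift_spin:
  assumes "0 < \<theta>" "\<theta> < 1"
  shows "a \<in> set_pmf (lift_spin \<theta> b) \<longleftrightarrow> b = (a \<noteq> Zero)"
  using assms by (cases b; cases a) (auto simp: lift_spin_def)

lemma set_pmf_lift:
  assumes "0 < \<theta>" "\<theta> < 1"
  shows "X \<in> set_pmf (lift \<theta> z) \<longleftrightarrow> contr X = z"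
  using assms by (auto simp: lift_eq_Pi_pmf set_Pi_pmf PiE_dflt_def set_pmf_lift_spin contr_def)

lemma pmf_bind_finite:
  fixes M :: "'a::finite pmf"
  shows "pmf (bind_pmf M f) x = (\<Sum>y\<in>UNIV. pmf M y * pmf (f y) x)"
  by (simp add: pmf_bind integral_measure_pmf_real[where A=UNIV] mult.commute)

lemma pmf_bind_lift:
  assumes "0 < \<theta>" "\<theta> < 1"
  shows "pmf (bind_pmf Z (lift \<theta>)) X = pmf Z (contr X) * pmf (lift \<theta> (contr X)) X"
proof -
  have "pmf (lift \<theta> z) X = 0" if "z \<noteq> contr X" for z
    using set_pmf_lift[OF assms, of X z] that by (auto simp: set_pmf_iff)
  then have "(\<Sum>z\<in>UNIV. pmf Z z * pmf (lift \<theta> z) X)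
      = (\<Sum>z\<in>UNIV. if z = contr X then pmf Z z * pmf (lift \<theta> z) X else 0)"
    by (intro sum.cong) auto
  then show ?thesis
    by (simp add: pmf_bind_finite)
qed

lemma lift_contr_of_set_pmf:
  assumes "0 < \<theta>" "\<theta> < 1" "X \<in> set_pmf (bind_pmf Z (lift \<theta>))"
  shows "contr X \<in> set_pmf Z"
  using assms(3) by (auto simp: set_pmf_lift[OF assms(1,2)])

lemma cyl_update [simp]: "cyl v (x(v := a)) = cyl v x"
  by (auto simp: cyl_def)

lemma feasible_update [simp]: "feasible p v (x(v := a)) \<longleftrightarrow> feasible p v x"
  by (simp add: feasible_def)

lemma cond_site_update: "feasible p v x \<Longrightarrow> cond_site p v (x(v := a)) = cond_site p v x"
  by (simp add: cond_site_def)

lemma feasible_iff_set_pmf: "feasible p v x \<longleftrightarrow> set_pmf p \<inter> cyl v x \<noteq> {}"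
  by (auto simp: feasible_def zero_less_measure_iff measure_pmf_zero_iff)

lemma feasible_of_set_pmf: "x \<in> set_pmf p \<Longrightarrow> feasible p v x"
  by (auto simp: feasible_iff_set_pmf cyl_def)

lemma cyl_eq_range_update: "cyl v x = range (\<lambda>a. x(v := a))"
  by (auto simp: cyl_def image_def fun_eq_iff intro: exI[of _ "_ v"])

lemma inj_update: "inj (\<lambda>a. x(v := a))"
  by (auto simp: inj_def fun_eq_iff dest: spec[of _ v])

lemma prob_cyl:
  fixes p :: "('v \<Rightarrow> 'a::finite) pmf"
  shows "measure_pmf.prob p (cyl v x) = (\<Sum>a\<in>UNIV. pmf p (x(v := a)))"
  by (simp add: cyl_eq_range_update measure_measure_pmf_finite sum.reindex inj_update)

lemma prob_cyl_bool:
  "measure_pmf.prob p (cyl v x) = pmf p (x(v := False)) + pmf p (x(v := True))"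
  by (simp add: prob_cyl UNIV_bool)

lemma pmf_cond_site:
  fixes p :: "('v \<Rightarrow> 'a::finite) pmf"
  assumes "feasible p v x"
  shows "pmf (cond_site p v x) a = pmf p (x(v := a)) / measure_pmf.prob p (cyl v x)"
proof -
  have ne: "set_pmf p \<inter> cyl v x \<noteq> {}"
    using assms by (simp add: feasible_iff_set_pmf)
  let ?C = "cond_pmf p (cyl v x)"
  have "pmf (cond_site p v x) a = measure_pmf.prob ?C ((\<lambda>y. y v) -` {a} \<inter> set_pmf ?C)"
    using assms by (simp add: cond_site_def pmf_map measure_Int_set_pmf)
  also have "(\<lambda>y. y v) -` {a} \<inter> set_pmf ?C = {x(v := a)} \<inter> set_pmf ?C"
    unfolding set_cond_pmf[OF ne] by (auto simp: cyl_def fun_eq_iff)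
  finally show ?thesis
    by (simp add: measure_Int_set_pmf measure_pmf_single pmf_cond[OF ne]) (simp add: cyl_def)
qed

lemma set_pmf_cond_site:
  assumes "feasible p v x" "a \<in> set_pmf (cond_site p v x)"
  shows "x(v := a) \<in> set_pmf p"
proof -
  have "set_pmf p \<inter> cyl v x \<noteq> {}"
    using assms(1) by (simp add: feasible_iff_set_pmf)
  moreover have "y = x(v := y v)" if "y \<in> cyl v x" for y
    using that by (auto simp: cyl_def fun_eq_iff)
  ultimately show ?thesis
    using assms by (auto simp: cond_site_def)
qed

lemma pmf_bind_update:
  fixes G :: "('v::finite \<Rightarrow> 'a::finite) pmf"
  shows "pmf (bind_pmf G (\<lambda>X. map_pmf (\<lambda>a. X(v := a)) (D X))) Y
       = (\<Sum>a\<in>UNIV. pmf G (Y(v := a)) * pmf (D (Y(v := a))) (Y v))"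
proof -
  have pmf_map_update: "pmf (map_pmf (\<lambda>a. X(v := a)) M) Y = (if X \<in> cyl v Y then pmf M (Y v) else 0)" for X M
  proof (cases "X \<in> cyl v Y")
    case True
    then have "Y = X(v := Y v)" by (auto simp: cyl_def fun_eq_iff)
    then show ?thesis
      using True pmf_map_inj'[OF inj_update[of X v], of M "Y v"] by simp
  next
    case False
    then have "Y \<notin> (\<lambda>a. X(v := a)) ` set_pmf M"
      by (auto simp: cyl_def)
    then show ?thesis
      using False by (simp add: pmf_map_outside)
  qed
  have "pmf (bind_pmf G (\<lambda>X. map_pmf (\<lambda>a. X(v := a)) (D X))) Y
      = (\<Sum>X\<in>UNIV. pmf G X * (if X \<in> cyl v Y then pmf (D X) (Y v) else 0))"
    by (simp only: pmf_bind_finite pmf_map_update)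
  also have "\<dots> = (\<Sum>X\<in>cyl v Y. pmf G X * pmf (D X) (Y v))"
    by (simp add: if_distrib sum.If_cases)
  finally show ?thesis
    by (simp only: cyl_eq_range_update sum.reindex[OF inj_update] comp_def)
qed

section \<open>Random-site updates and stochastic domination\<close>

definition site_update :: "('v \<Rightarrow> ('v \<Rightarrow> 'a) \<Rightarrow> 'a pmf) \<Rightarrow> ('v::finite \<Rightarrow> 'a) \<Rightarrow> ('v \<Rightarrow> 'a) pmf" where
  "site_update K X = bind_pmf (pmf_of_set UNIV) (\<lambda>v. map_pmf (\<lambda>a. X(v := a)) (K v X))"

lemma gd_step_eq_site_update: "gd_step p = site_update (\<lambda>v. cond_site p v)"
  by (simp add: fun_eq_iff gd_step_def site_update_def)

definition alg_site :: "real \<Rightarrow> ('v::finite \<Rightarrow> bool) pmf \<Rightarrow> 'v \<Rightarrow> ('v \<Rightarrow> spin) \<Rightarrow> spin pmf" where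
  "alg_site \<theta> \<mu> v X = (if X v = Star then return_pmf Star
     else map_pmf spin_of_bool (cond_site (tilt \<theta> \<mu>) v (contr X)))"

lemma alg_step_eq_site_update: "alg_step \<theta> \<mu> = site_update (alg_site \<theta> \<mu>)"
  unfolding fun_eq_iff alg_step_def site_update_def alg_site_def spin_of_bool_def
  by (auto intro!: bind_pmf_cong simp: pmf.map_comp o_def fun_upd_idem)

lemma set_pmf_site_update:
  "set_pmf (site_update K X) = (\<Union>v. (\<lambda>a. X(v := a)) ` set_pmf (K v X))"
  by (simp add: site_update_def)

lemma bind_site_update:
  "bind_pmf G (site_update K) =
     bind_pmf (pmf_of_set UNIV) (\<lambda>v. bind_pmf G (\<lambda>X. map_pmf (\<lambda>a. X(v := a)) (K v X)))"
  unfolding site_update_def by (rule bind_commute_pmf)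

lemma site_update_mono:
  fixes X X' :: "'v::finite \<Rightarrow> 'a::order"
  assumes "X \<le> X'" "\<And>v. rel_pmf (\<le>) (K v X) (K' v X')"
  shows "rel_pmf (\<le>) (site_update K X) (site_update K' X')"
  unfolding site_update_def
proof (rule rel_pmf_bindI[of "(=)"])
  show "rel_pmf (=) (pmf_of_set UNIV) (pmf_of_set (UNIV :: 'v set))"
    by (simp add: pmf.rel_eq)
next
  fix v v' :: 'v
  assume "v = v'"
  have "rel_pmf (\<lambda>a b. X(v := a) \<le> X'(v := b)) (K v X) (K' v X')"
    using assms(2)[of v] by (rule pmf.rel_mono_strong) (use assms(1) in \<open>auto simp: le_fun_def\<close>)
  then show "rel_pmf (\<le>) (map_pmf (\<lambda>a. X(v := a)) (K v X)) (map_pmf (\<lambda>a. X'(v' := a)) (K' v' X'))"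
    using \<open>v = v'\<close> by (simp add: pmf.rel_map)
qed

lemma rel_pmf_le_trans:
  fixes p q r :: "'a::preorder pmf"
  assumes "rel_pmf (\<le>) p q" "rel_pmf (\<le>) q r"
  shows "rel_pmf (\<le>) p r"
  using transp_rel_pmf[of "(\<le>) :: 'a \<Rightarrow> 'a \<Rightarrow> bool"] assms
  by (auto intro: transpI order_trans dest: transpD)

lemma rel_pmf_bind_mono_on:
  assumes "rel_pmf (\<le>) P Q" "\<forall>x\<in>set_pmf P. S x" "\<forall>y\<in>set_pmf Q. S y"
    and "\<And>x y. x \<le> y \<Longrightarrow> S x \<Longrightarrow> S y \<Longrightarrow> rel_pmf (\<le>) (K x) (K y)"
  shows "rel_pmf (\<le>) (bind_pmf P K) (bind_pmf Q K)"
proof (rule rel_pmf_bindI)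
  show "rel_pmf (\<lambda>x y. x \<le> y \<and> S x \<and> S y) P Q"
    using assms(1) by (rule pmf.rel_mono_strong) (use assms(2,3) in auto)
qed (use assms(4) in auto)

lemma rel_pmf_finite_couplingI:
  fixes p :: "'a::finite pmf" and q :: "'b::finite pmf" and w :: "'a \<times> 'b \<Rightarrow> real"
  assumes nonneg: "\<And>x. 0 \<le> w x"
    and fst_marginal: "\<And>a. (\<Sum>b\<in>UNIV. w (a, b)) = pmf p a"
    and snd_marginal: "\<And>b. (\<Sum>a\<in>UNIV. w (a, b)) = pmf q b"
    and support: "\<And>a b. w (a, b) \<noteq> 0 \<Longrightarrow> R a b"
  shows "rel_pmf R p q"
proof -
  have "(\<Sum>x\<in>UNIV. w x) = (\<Sum>x\<in>UNIV \<times> UNIV. w x)"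
    by (simp add: UNIV_Times_UNIV)
  also have "\<dots> = (\<Sum>a\<in>UNIV. \<Sum>b\<in>UNIV. w (a, b))"
    by (simp add: sum.cartesian_product)
  also have "\<dots> = 1"
    by (simp add: fst_marginal sum_pmf_eq_1)
  finally have "(\<integral>\<^sup>+ x. ennreal (w x) \<partial>count_space UNIV) = 1"
    by (simp add: nn_integral_count_space_finite sum_ennreal nonneg)
  then have pmf_w: "pmf (embed_pmf w) x = w x" for x
    by (rule pmf_embed_pmf[OF nonneg])
  have marginal: "pmf (map_pmf f (embed_pmf w)) c = (\<Sum>x\<in>f -` {c}. w x)" for f :: "'a \<times> 'b \<Rightarrow> 'c" and c
    by (simp add: pmf_map measure_measure_pmf_finite pmf_w)
  show ?thesis
  proof (rule rel_pmf.intros[where pq="embed_pmf w"])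
    show "R x y" if "(x, y) \<in> set_pmf (embed_pmf w)" for x y
      using that by (intro support) (simp add: set_pmf_iff pmf_w)
    show "map_pmf fst (embed_pmf w) = p"
    proof (rule pmf_eqI)
      fix a :: 'a
      have "fst -` {a} = Pair a ` (UNIV :: 'b set)" by auto
      then show "pmf (map_pmf fst (embed_pmf w)) a = pmf p a"
        by (simp only: marginal) (simp add: sum.reindex inj_def fst_marginal)
    qed
    show "map_pmf snd (embed_pmf w) = q"
    proof (rule pmf_eqI)
      fix b :: 'b
      have "snd -` {b} = (\<lambda>a. (a, b)) ` (UNIV :: 'a set)" by auto
      then show "pmf (map_pmf snd (embed_pmf w)) b = pmf q b"
        by (simp only: marginal) (simp add: sum.reindex inj_def snd_marginal)
    qed
  qed
qed

lemma rel_pmf_spin_leI: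
  fixes p q :: "spin pmf"
  assumes "pmf p Star \<le> pmf q Star" "pmf q Zero \<le> pmf p Zero"
  shows "rel_pmf (\<le>) p q"
proof -
  have sum_p: "pmf p Zero + pmf p One + pmf p Star = 1" and sum_q: "pmf q Zero + pmf q One + pmf q Star = 1"
    using sum_pmf_eq_1[of UNIV p] sum_pmf_eq_1[of UNIV q] by (simp_all add: sum_UNIV_spin)
  define m where "m = min (pmf p Zero - pmf q Zero) (pmf q One)"
  define w where "w = (\<lambda>(a, b).
      if a = Zero \<and> b = Zero then pmf q Zero
      else if a = Zero \<and> b = One then m
      else if a = Zero \<and> b = Star then pmf p Zero - pmf q Zero - m
      else if a = One \<and> b = One then pmf q One - m
      else if a = One \<and> b = Star then pmf p One - pmf q One + m
      else if a = Star \<and> b = Star then pmf p Star else 0)"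
  have "0 \<le> m" "m \<le> pmf p Zero - pmf q Zero" "m \<le> pmf q One" "0 \<le> pmf p One - pmf q One + m"
    using assms sum_p sum_q pmf_nonneg[of p One] by (auto simp: m_def min_def)
  then show ?thesis
  proof (intro rel_pmf_finite_couplingI[where w = w])
    show "(\<Sum>b\<in>UNIV. w (a, b)) = pmf p a" for a
      by (cases a) (auto simp: w_def sum_UNIV_spin)
    show "(\<Sum>a\<in>UNIV. w (a, b)) = pmf q b" for b
      using sum_p sum_q by (cases b) (auto simp: w_def sum_UNIV_spin)
    show "w (a, b) \<noteq> 0 \<Longrightarrow> a \<le> b" for a b
      by (cases a; cases b) (auto simp: w_def less_eq_spin_def)
  qed (auto simp: w_def)
qed

section \<open>The tilted measure and monotonicity of the algorithm\<close>

definition tilt_partition :: "real \<Rightarrow> ('v::finite \<Rightarrow> bool) pmf \<Rightarrow> real" where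
  "tilt_partition \<theta> \<mu> = (\<Sum>\<tau>\<in>UNIV. pmf \<mu> \<tau> * \<theta> ^ card {v. \<tau> v})"

lemma tilt_partition_pos:
  assumes "0 < \<theta>"
  shows "0 < tilt_partition \<theta> \<mu>"
proof -
  obtain \<tau> where "\<tau> \<in> set_pmf \<mu>"
    using set_pmf_not_empty[of \<mu>] by blast
  then show ?thesis
    unfolding tilt_partition_def using assms
    by (intro sum_pos2[of UNIV \<tau>]) (auto simp: pmf_positive)
qed

lemma pmf_tilt:
  assumes "0 < \<theta>"
  shows "pmf (tilt \<theta> \<mu>) \<sigma> = pmf \<mu> \<sigma> * \<theta> ^ card {v. \<sigma> v} / tilt_partition \<theta> \<mu>"
  unfolding tilt_def tilt_partition_def[symmetric]
proof (rule pmf_embed_pmf)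
  have Z: "0 < tilt_partition \<theta> \<mu>"
    by (rule tilt_partition_pos[OF assms])
  then show nonneg: "0 \<le> pmf \<mu> x * \<theta> ^ card {v. x v} / tilt_partition \<theta> \<mu>" for x
    using assms by simp
  have "(\<Sum>x\<in>UNIV. pmf \<mu> x * \<theta> ^ card {v. x v} / tilt_partition \<theta> \<mu>) = 1"
    using Z by (simp add: tilt_partition_def flip: sum_divide_distrib)
  then show "(\<integral>\<^sup>+ x. ennreal (pmf \<mu> x * \<theta> ^ card {v. x v} / tilt_partition \<theta> \<mu>) \<partial>count_space UNIV) = 1"
    by (simp add: nn_integral_count_space_finite sum_ennreal nonneg)
qed

lemma set_pmf_tilt:
  assumes "0 < \<theta>"
  shows "set_pmf (tilt \<theta> \<mu>) = set_pmf \<mu>"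
  using assms tilt_partition_pos[OF assms, of \<mu>]
  by (auto simp: set_pmf_iff pmf_tilt)

lemma pmf_cond_site_tilt:
  assumes "0 < \<theta>" "feasible \<mu> v \<sigma>"
  shows "pmf (cond_site (tilt \<theta> \<mu>) v \<sigma>) b
     = (if b then \<theta> * pmf \<mu> (\<sigma>(v := True)) else pmf \<mu> (\<sigma>(v := False)))
       / (pmf \<mu> (\<sigma>(v := False)) + \<theta> * pmf \<mu> (\<sigma>(v := True)))"
proof -
  define c where "c = \<theta> ^ card {u. (\<sigma>(v := False)) u} / tilt_partition \<theta> \<mu>"
  have "c > 0"
    using assms tilt_partition_pos[OF assms(1), of \<mu>] by (simp add: c_def)
  have "{u. (\<sigma>(v := True)) u} = insert v {u. (\<sigma>(v := False)) u}"
    by auto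
  then have "pmf (tilt \<theta> \<mu>) (\<sigma>(v := b)) = (if b then \<theta> * pmf \<mu> (\<sigma>(v := True)) else pmf \<mu> (\<sigma>(v := False))) * c" for b
    using assms by (cases b) (simp_all add: pmf_tilt c_def card_insert_disjoint)
  moreover have "feasible (tilt \<theta> \<mu>) v \<sigma>"
    using assms by (simp add: feasible_iff_set_pmf set_pmf_tilt)
  ultimately show ?thesis
    using \<open>c > 0\<close> by (simp add: pmf_cond_site prob_cyl_bool flip: distrib_right)
qed

lemma bernoulli_ratio_le_iff:
  fixes a0 a1 b0 b1 :: real
  assumes "0 < a0 + a1" "0 < b0 + b1"
  shows "a1 / (a0 + a1) \<le> b1 / (b0 + b1) \<longleftrightarrow> a1 * b0 \<le> b1 * a0"
  using assms by (simp add: field_simps)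

lemma cond_one_eq:
  "cond_one \<mu> v \<sigma> = pmf \<mu> (\<sigma>(v := True)) / measure_pmf.prob \<mu> (cyl v \<sigma>)"
proof -
  have "{x \<in> cyl v \<sigma>. x v} = {\<sigma>(v := True)}"
    by (auto simp: cyl_def fun_eq_iff)
  then show ?thesis
    by (simp add: cond_one_def measure_pmf_single)
qed

lemma monotone_systemD:
  assumes "monotone_system \<mu>" "feasible \<mu> v \<sigma>" "feasible \<mu> v \<tau>" "\<forall>u. u \<noteq> v \<longrightarrow> \<sigma> u \<le> \<tau> u"
  shows "pmf \<mu> (\<sigma>(v := True)) * pmf \<mu> (\<tau>(v := False)) \<le> pmf \<mu> (\<tau>(v := True)) * pmf \<mu> (\<sigma>(v := False))"
proof -
  have "cond_one \<mu> v \<sigma> \<le> cond_one \<mu> v \<tau>"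
    using assms unfolding monotone_system_def by blast
  moreover have "0 < measure_pmf.prob \<mu> (cyl v \<sigma>)" "0 < measure_pmf.prob \<mu> (cyl v \<tau>)"
    using assms(2,3) by (simp_all add: feasible_def)
  ultimately show ?thesis
    by (simp add: cond_one_eq prob_cyl_bool bernoulli_ratio_le_iff)
qed

lemma tilt_cond_site_denominator_pos:
  assumes "0 < \<theta>" "feasible \<mu> v \<rho>"
  shows "0 < pmf \<mu> (\<rho>(v := False)) + \<theta> * pmf \<mu> (\<rho>(v := True))"
proof -
  have "0 < pmf \<mu> (\<rho>(v := False)) \<or> 0 < pmf \<mu> (\<rho>(v := True))"
    using assms(2) pmf_nonneg[of \<mu>] by (auto simp: feasible_def prob_cyl_bool add_nonneg_eq_0_iff less_le)
  then show ?thesis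
    using assms(1) pmf_nonneg[of \<mu>] by (auto intro: add_pos_nonneg add_nonneg_pos)
qed

lemma tilt_cond_site_mono:
  assumes "monotone_system \<mu>" "0 < \<theta>" "feasible \<mu> v \<sigma>" "feasible \<mu> v \<tau>"
    "\<forall>u. u \<noteq> v \<longrightarrow> \<sigma> u \<le> \<tau> u"
  shows "pmf (cond_site (tilt \<theta> \<mu>) v \<sigma>) True \<le> pmf (cond_site (tilt \<theta> \<mu>) v \<tau>) True"
proof -
  have "\<theta> * (pmf \<mu> (\<sigma>(v := True)) * pmf \<mu> (\<tau>(v := False)))
      \<le> \<theta> * (pmf \<mu> (\<tau>(v := True)) * pmf \<mu> (\<sigma>(v := False)))"
    using monotone_systemD[OF assms(1,3,4,5)] assms(2) by simp
  then show ?thesis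
    using tilt_cond_site_denominator_pos[OF assms(2,3)] tilt_cond_site_denominator_pos[OF assms(2,4)] assms(2-4)
    by (simp add: pmf_cond_site_tilt bernoulli_ratio_le_iff mult_ac)
qed

lemma contr_mono: "X \<le> X' \<Longrightarrow> contr X \<le> contr X'"
  unfolding le_fun_def contr_def by (metis le_boolI spin_le_Zero_iff)

lemma lift_eq_map_Pi_bernoulli:
  "lift \<theta> z = map_pmf (\<lambda>c u. if z u then (if c u then One else Star) else Zero)
                        (Pi_pmf UNIV False (\<lambda>_. bernoulli_pmf \<theta>))"
proof -
  have "lift_spin \<theta> b = bind_pmf (bernoulli_pmf \<theta>) (\<lambda>c. return_pmf (if b then (if c then One else Star) else Zero))" for b
    by (simp add: lift_spin_def map_pmf_def)
  then show ?thesis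
    by (simp add: lift_eq_Pi_pmf Pi_pmf_bind[where d'=False] map_pmf_def)
qed

lemma lift_mono:
  assumes "z \<le> z'"
  shows "rel_pmf (\<le>) (lift \<theta> z) (lift \<theta> z')"
  unfolding lift_eq_map_Pi_bernoulli pmf.rel_map
  using assms by (intro rel_pmf_reflI) (auto simp: le_fun_def)

lemma pmf_map_spin_of_bool:
  "pmf (map_pmf spin_of_bool T) a = (case a of Zero \<Rightarrow> pmf T False | One \<Rightarrow> pmf T True | Star \<Rightarrow> 0)"
proof -
  have "inj spin_of_bool"
    by (auto simp: inj_def spin_of_bool_def split: if_splits)
  moreover have "Star \<notin> spin_of_bool ` set_pmf T"
    by (auto simp: spin_of_bool_def)
  ultimately show ?thesis
    using pmf_map_inj'[of spin_of_bool T True] pmf_map_inj'[of spin_of_bool T False]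
    by (cases a) (auto simp: spin_of_bool_def pmf_map_outside)
qed

lemma contr_update_spin_of_bool: "contr (X(v := spin_of_bool b)) = (contr X)(v := b)"
  by (auto simp: contr_def spin_of_bool_def)

lemma alg_site_mono:
  assumes "monotone_system \<mu>" "0 < \<theta>" "X \<le> X'" "contr X \<in> set_pmf \<mu>" "contr X' \<in> set_pmf \<mu>"
  shows "rel_pmf (\<le>) (alg_site \<theta> \<mu> v X) (alg_site \<theta> \<mu> v X')"
proof (cases "X' v = Star")
  case True
  then show ?thesis
    by (simp add: alg_site_def rel_pmf_return_pmf2)
next
  case False
  with \<open>X \<le> X'\<close> have "X v \<noteq> Star"
    by (metis le_fun_def Star_le_spin_iff)
  let ?T = "cond_site (tilt \<theta> \<mu>) v (contr X)" and ?T' = "cond_site (tilt \<theta> \<mu>) v (contr X')"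
  have "pmf ?T True \<le> pmf ?T' True"
    using contr_mono[OF assms(3)] assms
    by (intro tilt_cond_site_mono) (auto simp: feasible_of_set_pmf le_fun_def)
  then have "rel_pmf (\<le>) (map_pmf spin_of_bool ?T) (map_pmf spin_of_bool ?T')"
    by (intro rel_pmf_spin_leI) (simp_all add: pmf_map_spin_of_bool pmf_False_conv_True)
  with False \<open>X v \<noteq> Star\<close> show ?thesis
    by (simp add: alg_site_def)
qed

lemma alg_step_mono:
  assumes "monotone_system \<mu>" "0 < \<theta>" "X \<le> X'" "contr X \<in> set_pmf \<mu>" "contr X' \<in> set_pmf \<mu>"
  shows "rel_pmf (\<le>) (alg_step \<theta> \<mu> X) (alg_step \<theta> \<mu> X')"
  unfolding alg_step_eq_site_update
  using assms by (intro site_update_mono alg_site_mono)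

lemma contr_set_pmf_alg_step:
  assumes "0 < \<theta>" "contr X \<in> set_pmf \<mu>" "Y \<in> set_pmf (alg_step \<theta> \<mu> X)"
  shows "contr Y \<in> set_pmf \<mu>"
proof -
  obtain v a where Y: "Y = X(v := a)" "a \<in> set_pmf (alg_site \<theta> \<mu> v X)"
    using assms(3) by (auto simp: alg_step_eq_site_update set_pmf_site_update)
  show ?thesis
  proof (cases "X v = Star")
    case True
    then show ?thesis
      using Y assms(2) by (simp add: alg_site_def fun_upd_idem)
  next
    case False
    then obtain b where b: "a = spin_of_bool b" "b \<in> set_pmf (cond_site (tilt \<theta> \<mu>) v (contr X))"
      using Y(2) by (auto simp: alg_site_def)
    have "feasible (tilt \<theta> \<mu>) v (contr X)"
      using assms(1,2) by (simp add: feasible_of_set_pmf set_pmf_tilt)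
    from set_pmf_cond_site[OF this b(2)] show ?thesis
      using assms(1) by (simp add: Y(1) b(1) contr_update_spin_of_bool set_pmf_tilt)
  qed
qed

lemma contr_set_pmf_alg_refresh:
  assumes "0 < \<theta>" "\<theta> < 1" "Y \<in> set_pmf (alg_refresh \<theta> X)"
  shows "contr Y = contr X"
  using assms by (simp add: alg_refresh_def set_pmf_lift)

definition alg_kernel :: "real \<Rightarrow> ('v::finite \<Rightarrow> bool) pmf \<Rightarrow> nat \<Rightarrow> nat \<Rightarrow> ('v \<Rightarrow> spin) \<Rightarrow> ('v \<Rightarrow> spin) pmf" where
  "alg_kernel \<theta> \<mu> T2 t X =
     (if t mod T2 = 0 then bind_pmf (alg_refresh \<theta> X) (alg_step \<theta> \<mu>) else alg_step \<theta> \<mu> X)"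

lemma alg_law_Suc: "alg_law \<theta> \<mu> T2 (Suc t) = bind_pmf (alg_law \<theta> \<mu> T2 t) (alg_kernel \<theta> \<mu> T2 t)"
  by (simp add: alg_kernel_def[abs_def])

lemma contr_set_pmf_alg_kernel:
  assumes "0 < \<theta>" "\<theta> < 1" "contr X \<in> set_pmf \<mu>" "Y \<in> set_pmf (alg_kernel \<theta> \<mu> T2 t X)"
  shows "contr Y \<in> set_pmf \<mu>"
proof (cases "t mod T2 = 0")
  case True
  then obtain X' where "X' \<in> set_pmf (alg_refresh \<theta> X)" "Y \<in> set_pmf (alg_step \<theta> \<mu> X')"
    using assms(4) by (auto simp: alg_kernel_def)
  then show ?thesis
    using assms(3) contr_set_pmf_alg_refresh[OF assms(1,2)] contr_set_pmf_alg_step[OF assms(1)]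
    by metis
next
  case False
  then show ?thesis
    using assms(3,4) contr_set_pmf_alg_step[OF assms(1)] by (simp add: alg_kernel_def)
qed

lemma alg_kernel_mono:
  assumes "monotone_system \<mu>" "0 < \<theta>" "\<theta> < 1"
    and "X \<le> X'" "contr X \<in> set_pmf \<mu>" "contr X' \<in> set_pmf \<mu>"
  shows "rel_pmf (\<le>) (alg_kernel \<theta> \<mu> T2 t X) (alg_kernel \<theta> \<mu> T2 t X')"
proof -
  have "rel_pmf (\<le>) (bind_pmf (alg_refresh \<theta> X) (alg_step \<theta> \<mu>)) (bind_pmf (alg_refresh \<theta> X') (alg_step \<theta> \<mu>))"
  proof (rule rel_pmf_bind_mono_on[where S = "\<lambda>Y. contr Y \<in> set_pmf \<mu>"])
    show "rel_pmf (\<le>) (alg_refresh \<theta> X) (alg_refresh \<theta> X')"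
      unfolding alg_refresh_def by (intro lift_mono contr_mono assms(4))
  qed (use assms in \<open>auto intro: alg_step_mono dest: contr_set_pmf_alg_refresh[OF assms(2,3)]\<close>)
  then show ?thesis
    using assms by (simp add: alg_kernel_def alg_step_mono)
qed

section \<open>Lifting intertwines the Glauber dynamics\<close>

definition lift_off_site :: "real \<Rightarrow> ('v \<Rightarrow> bool) \<Rightarrow> ('v \<Rightarrow> spin) \<Rightarrow> 'v \<Rightarrow> real" where
  "lift_off_site \<theta> z X v = (\<Prod>u\<in>-{v}. pmf (lift_spin \<theta> (z u)) (X u))"

lemma lift_off_site_update [simp]:
  "lift_off_site \<theta> (z(v := b)) X v = lift_off_site \<theta> z X v"
  "lift_off_site \<theta> z (X(v := a)) v = lift_off_site \<theta> z X v"
  unfolding lift_off_site_def by (auto intro: prod.cong)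

lemma lift_off_site_pos:
  assumes "0 < \<theta>" "\<theta> < 1"
  shows "0 < lift_off_site \<theta> (contr X) X v"
  unfolding lift_off_site_def using assms set_pmf_lift_spin[OF assms]
  by (intro prod_pos) (auto simp: contr_def pmf_positive)

lemma pmf_lift_split:
  "pmf (lift \<theta> z) X = pmf (lift_spin \<theta> (z v)) (X v) * lift_off_site \<theta> z X v"
  unfolding lift_eq_Pi_pmf lift_off_site_def
  by (subst pmf_Pi') (auto simp: prod.remove[of UNIV v] Compl_eq_Diff_UNIV)

lemma pmf_bind_lift_update:
  assumes "0 < \<theta>" "\<theta> < 1"
  shows "pmf (bind_pmf Z (lift \<theta>)) (X(v := a))
       = pmf Z ((contr X)(v := a \<noteq> Zero)) * pmf (lift_spin \<theta> (a \<noteq> Zero)) a * lift_off_site \<theta> (contr X) X v"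
proof -
  have "contr (X(v := a)) = (contr X)(v := a \<noteq> Zero)"
    by (simp add: contr_def fun_eq_iff)
  then show ?thesis
    using assms by (simp add: pmf_bind_lift pmf_lift_split[where v = v])
qed

lemma pmf_bind_lift_spin:
  assumes "0 < \<theta>" "\<theta> < 1"
  shows "pmf (bind_pmf B (lift_spin \<theta>)) a = pmf B (a \<noteq> Zero) * pmf (lift_spin \<theta> (a \<noteq> Zero)) a"
proof -
  have "pmf (lift_spin \<theta> b) a = 0" if "b \<noteq> (a \<noteq> Zero)" for b
    using set_pmf_lift_spin[OF assms, of a b] that by (simp add: set_pmf_iff)
  then show ?thesis
    by (cases "a = Zero") (auto simp: pmf_bind_finite UNIV_bool)
qed

lemma cond_site_bind_lift:
  fixes Z :: "('v::finite \<Rightarrow> bool) pmf"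
  assumes "0 < \<theta>" "\<theta> < 1" "feasible (bind_pmf Z (lift \<theta>)) v X"
  shows "feasible Z v (contr X)"
    and "cond_site (bind_pmf Z (lift \<theta>)) v X = bind_pmf (cond_site Z v (contr X)) (lift_spin \<theta>)"
proof -
  let ?G = "bind_pmf Z (lift \<theta>)" and ?s = "contr X"
  define R where "R = lift_off_site \<theta> ?s X v"
  have "0 < R"
    unfolding R_def by (rule lift_off_site_pos[OF assms(1,2)])
  have G_update: "pmf ?G (X(v := a)) = pmf Z (?s(v := a \<noteq> Zero)) * pmf (lift_spin \<theta> (a \<noteq> Zero)) a * R" for a
    unfolding R_def by (rule pmf_bind_lift_update[OF assms(1,2)])
  have prob_G: "measure_pmf.prob ?G (cyl v X) = measure_pmf.prob Z (cyl v ?s) * R"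
    using assms(1,2)
    by (simp add: prob_cyl[of ?G] sum_UNIV_spin G_update pmf_lift_spin prob_cyl_bool algebra_simps)
  then show feasible: "feasible Z v ?s"
    using assms(3) \<open>0 < R\<close> by (simp add: feasible_def zero_less_mult_iff)
  show "cond_site ?G v X = bind_pmf (cond_site Z v ?s) (lift_spin \<theta>)"
    using assms \<open>0 < R\<close> feasible
    by (intro pmf_eqI) (simp add: pmf_cond_site G_update prob_G pmf_bind_lift_spin)
qed

lemma lift_resample_site:
  fixes z :: "'v::finite \<Rightarrow> bool"
  assumes "0 \<le> \<theta>" "\<theta> \<le> 1"
  shows "bind_pmf (lift \<theta> z) (\<lambda>X. map_pmf (\<lambda>a. X(v := a)) (bind_pmf C (lift_spin \<theta>)))
       = bind_pmf C (\<lambda>b. lift \<theta> (z(v := b)))"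
proof (rule pmf_eqI)
  fix Y
  have "(\<Sum>a\<in>UNIV. pmf (lift_spin \<theta> b) a) = 1" for b
    by (rule sum_pmf_eq_1) auto
  then show "pmf (bind_pmf (lift \<theta> z) (\<lambda>X. map_pmf (\<lambda>a. X(v := a)) (bind_pmf C (lift_spin \<theta>)))) Y
      = pmf (bind_pmf C (\<lambda>b. lift \<theta> (z(v := b)))) Y"
    by (simp add: pmf_bind_update pmf_lift_split[where v = v] pmf_bind_finite[of C]
        flip: sum_distrib_right) (simp add: sum_distrib_left mult_ac)
qed

lemma set_pmf_gd_step:
  assumes "x \<in> set_pmf p"
  shows "set_pmf (gd_step p x) \<subseteq> set_pmf p"
  using assms set_pmf_cond_site[OF feasible_of_set_pmf[OF assms]]
  by (auto simp: gd_step_eq_site_update set_pmf_site_update)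

lemma set_pmf_gd_law:
  assumes "x \<in> set_pmf p"
  shows "set_pmf (gd_law p (return_pmf x) t) \<subseteq> set_pmf p"
  by (induction t) (use assms set_pmf_gd_step in auto)

lemma bind_lift_gd_step:
  fixes \<mu> :: "('v::finite \<Rightarrow> bool) pmf"
  assumes "0 < \<theta>" "\<theta> < 1" "z \<in> set_pmf \<mu>"
  shows "bind_pmf (lift \<theta> z) (gd_step (lifted \<theta> \<mu>)) = bind_pmf (gd_step \<mu> z) (lift \<theta>)"
proof -
  have "bind_pmf (lift \<theta> z) (\<lambda>X. map_pmf (\<lambda>a. X(v := a)) (cond_site (lifted \<theta> \<mu>) v X))
      = bind_pmf (lift \<theta> z) (\<lambda>X. map_pmf (\<lambda>a. X(v := a)) (bind_pmf (cond_site \<mu> v z) (lift_spin \<theta>)))" for v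
  proof (rule bind_pmf_cong[OF refl])
    fix X assume X: "X \<in> set_pmf (lift \<theta> z)"
    then have "contr X = z"
      using set_pmf_lift[OF assms(1,2)] by blast
    have "feasible (bind_pmf \<mu> (lift \<theta>)) v X"
      by (rule feasible_of_set_pmf) (use X assms(3) in auto)
    from cond_site_bind_lift(2)[OF assms(1,2) this] \<open>contr X = z\<close>
    show "map_pmf (\<lambda>a. X(v := a)) (cond_site (lifted \<theta> \<mu>) v X)
        = map_pmf (\<lambda>a. X(v := a)) (bind_pmf (cond_site \<mu> v z) (lift_spin \<theta>))"
      by (simp add: lifted_def)
  qed
  then show ?thesis
    using assms(1,2)
    by (simp add: gd_step_eq_site_update bind_site_update lift_resample_site bind_map_pmf
        site_update_def bind_assoc_pmf)
qed

lemma gd_law_lifted: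
  fixes \<mu> :: "('v::finite \<Rightarrow> bool) pmf"
  assumes "0 < \<theta>" "\<theta> < 1" "x \<in> set_pmf \<mu>"
  shows "gd_law (lifted \<theta> \<mu>) (lift \<theta> x) t = bind_pmf (gd_law \<mu> (return_pmf x) t) (lift \<theta>)"
proof (induction t)
  case 0
  then show ?case
    by (simp add: bind_return_pmf)
next
  case (Suc t)
  have "bind_pmf (gd_law \<mu> (return_pmf x) t) (\<lambda>z. bind_pmf (lift \<theta> z) (gd_step (lifted \<theta> \<mu>)))
      = bind_pmf (gd_law \<mu> (return_pmf x) t) (\<lambda>z. bind_pmf (gd_step \<mu> z) (lift \<theta>))"
    using set_pmf_gd_law[OF assms(3)] by (intro bind_pmf_cong) (auto intro: bind_lift_gd_step[OF assms(1,2)])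
  then show ?case
    using Suc by (simp add: bind_assoc_pmf)
qed

section \<open>Glauber dynamics on a monotone system keeps an increasing density\<close>

text \<open>The density of \<nu> with respect to \<mu> is increasing on the support of \<mu>; cross-multiplied to
  avoid dividing by zero.\<close>
definition increasing_density :: "('v \<Rightarrow> bool) pmf \<Rightarrow> ('v \<Rightarrow> bool) pmf \<Rightarrow> bool" where
  "increasing_density \<mu> \<nu> \<longleftrightarrow> set_pmf \<nu> \<subseteq> set_pmf \<mu> \<and>
     (\<forall>x y. x \<le> y \<longrightarrow> pmf \<nu> x * pmf \<mu> y \<le> pmf \<nu> y * pmf \<mu> x)"

lemma increasing_density_return_top:
  assumes "(\<lambda>_. True) \<in> set_pmf \<mu>"
  shows "increasing_density \<mu> (return_pmf (\<lambda>_. True))"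
proof -
  have "x = (\<lambda>_. True) \<Longrightarrow> x \<le> y \<Longrightarrow> y = (\<lambda>_. True)" for x y :: "'v \<Rightarrow> bool"
    by (auto simp: le_fun_def)
  then show ?thesis
    using assms by (auto simp: increasing_density_def indicator_def)
qed

lemma pmf_bind_gd_step:
  fixes \<mu> \<nu> :: "('v::finite \<Rightarrow> 'a::finite) pmf"
  assumes "set_pmf \<nu> \<subseteq> set_pmf \<mu>"
  shows "pmf (bind_pmf \<nu> (gd_step \<mu>)) y =
    pmf \<mu> y * (\<Sum>v\<in>UNIV. measure_pmf.prob \<nu> (cyl v y) / measure_pmf.prob \<mu> (cyl v y)) / card (UNIV :: 'v set)"
proof -
  have update_term: "pmf \<nu> (y(v := a)) * pmf (cond_site \<mu> v (y(v := a))) (y v)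
      = pmf \<nu> (y(v := a)) * (pmf \<mu> y / measure_pmf.prob \<mu> (cyl v y))" for v a
  proof (cases "y(v := a) \<in> set_pmf \<nu>")
    case True
    then have "feasible \<mu> v y"
      using assms feasible_of_set_pmf[of "y(v := a)" \<mu> v] by auto
    then show ?thesis
      by (simp add: cond_site_update pmf_cond_site)
  qed (simp add: set_pmf_iff)
  have "pmf (bind_pmf \<nu> (\<lambda>X. map_pmf (\<lambda>a. X(v := a)) (cond_site \<mu> v X))) y
      = pmf \<mu> y * (measure_pmf.prob \<nu> (cyl v y) / measure_pmf.prob \<mu> (cyl v y))" for v
    by (simp add: pmf_bind_update update_term prob_cyl[of \<nu>] mult_ac) (simp add: sum_distrib_left sum_divide_distrib)
  then show ?thesis
    by (simp add: gd_step_eq_site_update bind_site_update pmf_bind_pmf_of_set sum_distrib_left)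
qed

text \<open>The two sides are the conditional expectations of the density \<nu>/\<mu> on the cylinders
  {x0, x1} and {y0, y1} of comparable configurations x <= y (masses a, b under \<mu> and n, p
  under \<nu>); only the comparisons x0 <= y0, x1 <= y1 and x0 <= y1 are needed.\<close>
lemma sum_ratio_le:
  fixes a0 a1 b0 b1 n0 n1 p0 p1 :: real
  assumes nonneg: "0 \<le> a0" "0 \<le> a1" "0 \<le> b0" "0 \<le> b1" "0 \<le> n0" "0 \<le> n1" "0 \<le> p0" "0 \<le> p1"
    and pos: "0 < a0 + a1" "0 < b0 + b1"
    and mono: "a1 * b0 \<le> b1 * a0"
    and ratio: "n0 * b0 \<le> p0 * a0" "n1 * b1 \<le> p1 * a1" "n0 * b1 \<le> p1 * a0"
    and support: "a1 = 0 \<Longrightarrow> n1 = 0" "b0 = 0 \<Longrightarrow> p0 = 0"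
  shows "(n0 + n1) / (a0 + a1) \<le> (p0 + p1) / (b0 + b1)"
proof -
  have "(n0 + n1) * (b0 + b1) \<le> (p0 + p1) * (a0 + a1)"
  proof (cases "a1 = 0 \<or> b0 = 0")
    case True
    then show ?thesis
      using nonneg ratio support by (auto simp: algebra_simps)
  next
    case False
    with nonneg have "0 < a1" "0 < b0"
      by auto
    then have "0 < b1 * a0"
      using mono by (smt (verit) mult_pos_pos)
    then have "0 < a0" "0 < b1"
      using nonneg by (auto simp: zero_less_mult_iff)
    define f0 where "f0 = n0 / a0"
    define f1 where "f1 = n1 / a1"
    define g0 where "g0 = p0 / b0"
    define g1 where "g1 = p1 / b1"
    have n: "n0 = f0 * a0" "n1 = f1 * a1" and p: "p0 = g0 * b0" "p1 = g1 * b1"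
      using \<open>0 < a0\<close> \<open>0 < a1\<close> \<open>0 < b0\<close> \<open>0 < b1\<close> by (simp_all add: f0_def f1_def g0_def g1_def)
    have "f0 \<le> g0" "f1 \<le> g1" "f0 \<le> g1"
      using ratio \<open>0 < a0\<close> \<open>0 < a1\<close> \<open>0 < b0\<close> \<open>0 < b1\<close>
      by (simp_all add: n p mult.assoc mult.left_commute[of _ a0] mult.left_commute[of _ a1])
    then have "0 \<le> (g1 - f0) * (a0 * b1 - a1 * b0) + (g1 - f1 + g0 - f0) * (a1 * b0)"
      using mono \<open>0 < a1\<close> \<open>0 < b0\<close> by (intro add_nonneg_nonneg mult_nonneg_nonneg) (auto simp: mult.commute)
    moreover have "(p0 + p1) * (a0 + a1) - (n0 + n1) * (b0 + b1)
        = (p0 * a0 - n0 * b0) + (p1 * a1 - n1 * b1)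
          + ((g1 - f0) * (a0 * b1 - a1 * b0) + (g1 - f1 + g0 - f0) * (a1 * b0))"
      by (simp add: n p algebra_simps)
    ultimately show ?thesis
      using ratio by linarith
  qed
  then show ?thesis
    using pos by (simp add: divide_le_eq le_divide_eq mult.commute)
qed

lemma cyl_ratio_mono:
  fixes \<mu> \<nu> :: "('v \<Rightarrow> bool) pmf"
  assumes "monotone_system \<mu>" "increasing_density \<mu> \<nu>" "x \<le> y" "x \<in> set_pmf \<mu>" "y \<in> set_pmf \<mu>"
  shows "measure_pmf.prob \<nu> (cyl v x) / measure_pmf.prob \<mu> (cyl v x)
       \<le> measure_pmf.prob \<nu> (cyl v y) / measure_pmf.prob \<mu> (cyl v y)"
proof -
  have cross: "u \<le> w \<Longrightarrow> pmf \<nu> u * pmf \<mu> w \<le> pmf \<nu> w * pmf \<mu> u" for u w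
    using assms(2) by (simp add: increasing_density_def)
  have support: "pmf \<mu> u = 0 \<Longrightarrow> pmf \<nu> u = 0" for u
    using assms(2) by (auto simp: increasing_density_def set_pmf_iff)
  have le_update: "x(v := b) \<le> y(v := b')" if "b \<le> b'" for b b'
    using assms(3) that by (auto simp: le_fun_def)
  have fx: "feasible \<mu> v x" and fy: "feasible \<mu> v y"
    using assms(4,5) by (simp_all add: feasible_of_set_pmf)
  show ?thesis
    unfolding prob_cyl_bool
  proof (rule sum_ratio_le)
    show "0 < pmf \<mu> (x(v := False)) + pmf \<mu> (x(v := True))"
      "0 < pmf \<mu> (y(v := False)) + pmf \<mu> (y(v := True))"
      using fx fy by (simp_all add: feasible_def prob_cyl_bool)
    show "pmf \<mu> (x(v := True)) * pmf \<mu> (y(v := False)) \<le> pmf \<mu> (y(v := True)) * pmf \<mu> (x(v := False))"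
      using monotone_systemD[OF assms(1) fx fy] assms(3) by (simp add: le_fun_def)
  qed (use cross le_update support in auto)
qed

lemma increasing_density_gd_step:
  assumes "monotone_system \<mu>" "increasing_density \<mu> \<nu>"
  shows "increasing_density \<mu> (bind_pmf \<nu> (gd_step \<mu>))"
proof -
  have sub: "set_pmf \<nu> \<subseteq> set_pmf \<mu>"
    using assms(2) by (simp add: increasing_density_def)
  define S where "S y = (\<Sum>v\<in>UNIV. measure_pmf.prob \<nu> (cyl v y) / measure_pmf.prob \<mu> (cyl v y))" for y
  define n where "n = real (card (UNIV :: 'a set))"
  have step: "pmf (bind_pmf \<nu> (gd_step \<mu>)) y = pmf \<mu> y * S y / n" for y
    unfolding S_def n_def by (rule pmf_bind_gd_step[OF sub])
  have "0 < n"
    by (simp add: n_def)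
  have "pmf (bind_pmf \<nu> (gd_step \<mu>)) x * pmf \<mu> y \<le> pmf (bind_pmf \<nu> (gd_step \<mu>)) y * pmf \<mu> x"
    if "x \<le> y" for x y
  proof (cases "x \<in> set_pmf \<mu> \<and> y \<in> set_pmf \<mu>")
    case True
    then have "S x \<le> S y"
      unfolding S_def using cyl_ratio_mono[OF assms that] by (intro sum_mono) auto
    then show ?thesis
      using \<open>0 < n\<close> by (simp add: step mult_ac) (intro divide_right_mono mult_right_mono, auto)
  next
    case False
    then show ?thesis
      by (auto simp: step set_pmf_iff)
  qed
  moreover have "set_pmf (bind_pmf \<nu> (gd_step \<mu>)) \<subseteq> set_pmf \<mu>"
    using sub set_pmf_gd_step by fastforce
  ultimately show ?thesis
    by (simp add: increasing_density_def)
qed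

lemma increasing_density_gd_law:
  assumes "monotone_system \<mu>" "(\<lambda>_. True) \<in> set_pmf \<mu>"
  shows "increasing_density \<mu> (gd_law \<mu> (return_pmf (\<lambda>_. True)) t)"
  by (induction t) (simp_all add: increasing_density_return_top[OF assms(2)] increasing_density_gd_step[OF assms(1)])

section \<open>Comparison of the two processes\<close>

lemma bind_pmf_disintegrate_site:
  fixes G :: "('v \<Rightarrow> 'a) pmf"
  shows "bind_pmf G K = bind_pmf (map_pmf (\<lambda>X. X(v := c)) G) (\<lambda>Y. bind_pmf (cond_pmf G (cyl v Y)) K)"
proof -
  define R where "R Y X \<longleftrightarrow> (\<forall>u. u \<noteq> v \<longrightarrow> X u = Y u)" for Y X :: "'v \<Rightarrow> 'a"
  have cyl_R: "cyl v Y = {X. R Y X}" for Y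
    by (simp add: cyl_def R_def)
  have "bind_pmf (map_pmf (\<lambda>X. X(v := c)) G) (\<lambda>Y. cond_pmf G {X. R Y X}) = G"
  proof (rule bind_cond_pmf_cancel)
    fix Y
    assume "Y \<in> set_pmf (map_pmf (\<lambda>X. X(v := c)) G)"
    then show "set_pmf G \<inter> {X. R Y X} \<noteq> {}"
      by (auto simp: R_def)
  next
    fix X
    assume "X \<in> set_pmf G"
    then show "set_pmf (map_pmf (\<lambda>X. X(v := c)) G) \<inter> {Y. R Y X} \<noteq> {}"
      by (auto simp: R_def)
  next
    fix Y X
    assume "R Y X"
    then have "(\<lambda>X. X(v := c)) -` {Y'. R Y' X} = {X'. R Y X'}"
      by (auto simp: R_def)
    then show "measure_pmf.prob G {X'. R Y X'} = measure_pmf.prob (map_pmf (\<lambda>X. X(v := c)) G) {Y'. R Y' X}"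
      by simp
  qed
  then have "bind_pmf G K = bind_pmf (bind_pmf (map_pmf (\<lambda>X. X(v := c)) G) (\<lambda>Y. cond_pmf G (cyl v Y))) K"
    by (simp only: cyl_R)
  also have "\<dots> = bind_pmf (map_pmf (\<lambda>X. X(v := c)) G) (\<lambda>Y. bind_pmf (cond_pmf G (cyl v Y)) K)"
    by (rule bind_assoc_pmf)
  finally show ?thesis .
qed

lemma bind_cond_cyl_update:
  assumes "feasible G v Y"
  shows "bind_pmf (cond_pmf G (cyl v Y)) (\<lambda>X. map_pmf (\<lambda>a. X(v := a)) (D X))
       = map_pmf (\<lambda>a. Y(v := a)) (bind_pmf (cond_site G v Y) (\<lambda>a. D (Y(v := a))))"
proof -
  have ne: "set_pmf G \<inter> cyl v Y \<noteq> {}"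
    using assms by (simp add: feasible_iff_set_pmf)
  have "bind_pmf (cond_pmf G (cyl v Y)) (\<lambda>X. map_pmf (\<lambda>a. X(v := a)) (D X))
      = bind_pmf (cond_pmf G (cyl v Y)) (\<lambda>X. map_pmf (\<lambda>a. Y(v := a)) (D (Y(v := X v))))"
  proof (rule bind_pmf_cong[OF refl])
    fix X
    assume "X \<in> set_pmf (cond_pmf G (cyl v Y))"
    then have "X \<in> cyl v Y"
      unfolding set_cond_pmf[OF ne] by blast
    then have "(\<lambda>a. X(v := a)) = (\<lambda>a. Y(v := a))" and "X = Y(v := X v)"
      by (auto simp: cyl_def fun_eq_iff)
    then show "map_pmf (\<lambda>a. X(v := a)) (D X) = map_pmf (\<lambda>a. Y(v := a)) (D (Y(v := X v)))"
      by simp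
  qed
  then show ?thesis
    using assms by (simp add: cond_site_def map_bind_pmf bind_map_pmf)
qed

lemma bind_site_update_disintegrate:
  "bind_pmf G (\<lambda>X. map_pmf (\<lambda>a. X(v := a)) (D X)) =
     bind_pmf (map_pmf (\<lambda>X. X(v := c)) G)
       (\<lambda>Y. map_pmf (\<lambda>a. Y(v := a)) (bind_pmf (cond_site G v Y) (\<lambda>a. D (Y(v := a)))))"
proof -
  have "bind_pmf G (\<lambda>X. map_pmf (\<lambda>a. X(v := a)) (D X)) =
      bind_pmf (map_pmf (\<lambda>X. X(v := c)) G)
        (\<lambda>Y. bind_pmf (cond_pmf G (cyl v Y)) (\<lambda>X. map_pmf (\<lambda>a. X(v := a)) (D X)))"
    by (rule bind_pmf_disintegrate_site)
  also have "\<dots> = bind_pmf (map_pmf (\<lambda>X. X(v := c)) G)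
      (\<lambda>Y. map_pmf (\<lambda>a. Y(v := a)) (bind_pmf (cond_site G v Y) (\<lambda>a. D (Y(v := a)))))"
  proof (rule bind_pmf_cong[OF refl])
    fix Y
    assume "Y \<in> set_pmf (map_pmf (\<lambda>X. X(v := c)) G)"
    then have "feasible G v Y"
      by (auto simp: feasible_iff_set_pmf cyl_def)
    then show "bind_pmf (cond_pmf G (cyl v Y)) (\<lambda>X. map_pmf (\<lambda>a. X(v := a)) (D X)) =
        map_pmf (\<lambda>a. Y(v := a)) (bind_pmf (cond_site G v Y) (\<lambda>a. D (Y(v := a))))"
      by (rule bind_cond_cyl_update)
  qed
  finally show ?thesis .
qed

lemma cond_site_le_of_increasing_density:
  assumes "increasing_density \<mu> Z" "feasible Z v s"
  shows "pmf (cond_site \<mu> v s) True \<le> pmf (cond_site Z v s) True"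
proof -
  have "feasible \<mu> v s"
    using assms by (auto simp: feasible_iff_set_pmf increasing_density_def)
  moreover have "pmf Z (s(v := False)) * pmf \<mu> (s(v := True)) \<le> pmf Z (s(v := True)) * pmf \<mu> (s(v := False))"
    using assms(1) by (simp add: increasing_density_def le_fun_def)
  ultimately show ?thesis
    using assms(2) by (simp add: pmf_cond_site feasible_def prob_cyl_bool bernoulli_ratio_le_iff mult.commute)
qed

lemma cond_site_tilt_False:
  assumes "0 < \<theta>" "feasible \<mu> v s"
  shows "pmf (cond_site (tilt \<theta> \<mu>) v s) False * (pmf (cond_site \<mu> v s) False + \<theta> * pmf (cond_site \<mu> v s) True)
       = pmf (cond_site \<mu> v s) False"
proof -
  define m0 m1 where "m0 = pmf \<mu> (s(v := False))" and "m1 = pmf \<mu> (s(v := True))"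
  have "0 < m0 + \<theta> * m1"
    unfolding m0_def m1_def by (rule tilt_cond_site_denominator_pos[OF assms])
  have "pmf (cond_site \<mu> v s) False + \<theta> * pmf (cond_site \<mu> v s) True = (m0 + \<theta> * m1) / (m0 + m1)"
    using assms(2) by (simp add: pmf_cond_site prob_cyl_bool m0_def m1_def add_divide_distrib)
  then show ?thesis
    using assms \<open>0 < m0 + \<theta> * m1\<close>
    by (simp add: pmf_cond_site_tilt pmf_cond_site prob_cyl_bool m0_def m1_def)
qed

text \<open>The last hypothesis says that T is the \<theta>-tilt of P.\<close>
lemma lift_spin_le_refresh_resample:
  fixes P Q T :: "bool pmf"
  assumes "0 < \<theta>" "\<theta> < 1" "pmf P True \<le> pmf Q True"
    and "pmf T False * (pmf P False + \<theta> * pmf P True) = pmf P False"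
  shows "rel_pmf (\<le>) (bind_pmf P (lift_spin \<theta>))
           (bind_pmf (bind_pmf Q (lift_spin \<theta>)) (\<lambda>a. if a = Star then return_pmf Star else map_pmf spin_of_bool T))"
proof (rule rel_pmf_spin_leI)
  show "pmf (bind_pmf P (lift_spin \<theta>)) Star
      \<le> pmf (bind_pmf (bind_pmf Q (lift_spin \<theta>)) (\<lambda>a. if a = Star then return_pmf Star else map_pmf spin_of_bool T)) Star"
    using assms by (simp add: pmf_bind_finite[of "bind_pmf Q _"] sum_UNIV_spin pmf_bind_lift_spin
        pmf_lift_spin pmf_map_spin_of_bool)
  have "(1 - \<theta>) * pmf P True \<le> (1 - \<theta>) * pmf Q True"
    using assms(2,3) by (intro mult_left_mono) auto
  then have "pmf Q False + \<theta> * pmf Q True \<le> pmf P False + \<theta> * pmf P True"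
    by (simp add: pmf_False_conv_True algebra_simps)
  then have "(pmf Q False + \<theta> * pmf Q True) * pmf T False \<le> (pmf P False + \<theta> * pmf P True) * pmf T False"
    by (rule mult_right_mono) simp
  then show "pmf (bind_pmf (bind_pmf Q (lift_spin \<theta>)) (\<lambda>a. if a = Star then return_pmf Star else map_pmf spin_of_bool T)) Zero
      \<le> pmf (bind_pmf P (lift_spin \<theta>)) Zero"
    using assms by (simp add: pmf_bind_finite[of "bind_pmf Q _"] sum_UNIV_spin pmf_bind_lift_spin
        pmf_lift_spin pmf_map_spin_of_bool algebra_simps)
qed

lemma lifted_cond_site_le_alg_site:
  fixes \<mu> Z :: "('v::finite \<Rightarrow> bool) pmf"
  assumes "0 < \<theta>" "\<theta> < 1" "increasing_density \<mu> Z" "feasible (bind_pmf Z (lift \<theta>)) v Y"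
  shows "rel_pmf (\<le>) (cond_site (lifted \<theta> \<mu>) v Y)
           (bind_pmf (cond_site (bind_pmf Z (lift \<theta>)) v Y) (\<lambda>a. alg_site \<theta> \<mu> v (Y(v := a))))"
proof -
  let ?s = "contr Y"
  have feasible_Z: "feasible Z v ?s"
    by (rule cond_site_bind_lift(1)[OF assms(1,2,4)])
  then have feasible_\<mu>: "feasible \<mu> v ?s"
    using assms(3) by (auto simp: feasible_iff_set_pmf increasing_density_def)
  have "set_pmf (bind_pmf Z (lift \<theta>)) \<subseteq> set_pmf (lifted \<theta> \<mu>)"
    using assms(3) by (auto simp: lifted_def increasing_density_def)
  then have "feasible (bind_pmf \<mu> (lift \<theta>)) v Y"
    using assms(4) by (auto simp: feasible_iff_set_pmf lifted_def)
  then have "cond_site (lifted \<theta> \<mu>) v Y = bind_pmf (cond_site \<mu> v ?s) (lift_spin \<theta>)"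
    unfolding lifted_def by (rule cond_site_bind_lift(2)[OF assms(1,2)])
  moreover have "alg_site \<theta> \<mu> v (Y(v := a)) =
      (if a = Star then return_pmf Star else map_pmf spin_of_bool (cond_site (tilt \<theta> \<mu>) v ?s))" for a
  proof -
    have "feasible (tilt \<theta> \<mu>) v ?s"
      using feasible_\<mu> assms(1) by (simp add: feasible_iff_set_pmf set_pmf_tilt)
    moreover have "contr (Y(v := a)) = ?s(v := a \<noteq> Zero)"
      by (simp add: contr_def fun_eq_iff)
    ultimately show ?thesis
      by (simp add: alg_site_def cond_site_update)
  qed
  ultimately show ?thesis
    using assms(1,2)
    by (simp add: cond_site_bind_lift(2)[OF assms(1,2,4)] bind_assoc_pmf[symmetric]
        lift_spin_le_refresh_resample cond_site_le_of_increasing_density[OF assms(3) feasible_Z]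
        cond_site_tilt_False[OF assms(1) feasible_\<mu>])
qed

lemma lifted_gd_step_le_alg_step:
  fixes \<mu> Z :: "('v::finite \<Rightarrow> bool) pmf"
  assumes "0 < \<theta>" "\<theta> < 1" "increasing_density \<mu> Z"
  shows "rel_pmf (\<le>) (bind_pmf (bind_pmf Z (lift \<theta>)) (gd_step (lifted \<theta> \<mu>)))
                     (bind_pmf (bind_pmf Z (lift \<theta>)) (alg_step \<theta> \<mu>))"
proof -
  let ?G = "bind_pmf Z (lift \<theta>)" and ?\<pi> = "lifted \<theta> \<mu>"
  have sub: "set_pmf ?G \<subseteq> set_pmf ?\<pi>"
    using assms(3) by (auto simp: lifted_def increasing_density_def)
  have site: "rel_pmf (\<le>) (bind_pmf ?G (\<lambda>X. map_pmf (\<lambda>a. X(v := a)) (cond_site ?\<pi> v X)))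
                     (bind_pmf ?G (\<lambda>X. map_pmf (\<lambda>a. X(v := a)) (alg_site \<theta> \<mu> v X)))" for v
    unfolding bind_site_update_disintegrate[of ?G v _ Zero]
  proof (rule rel_pmf_bindI)
    let ?W = "map_pmf (\<lambda>X. X(v := Zero)) ?G"
    show "rel_pmf (\<lambda>Y Y'. Y = Y' \<and> Y \<in> set_pmf ?W) ?W ?W"
      by (rule rel_pmf_reflI) simp
    fix Y Y'
    assume "Y = Y' \<and> Y \<in> set_pmf ?W"
    then have "Y' = Y" and feasible_G: "feasible ?G v Y"
      by (auto simp: feasible_iff_set_pmf cyl_def)
    then have "feasible ?\<pi> v Y"
      using sub by (auto simp: feasible_iff_set_pmf)
    then have "bind_pmf (cond_site ?G v Y) (\<lambda>a. cond_site ?\<pi> v (Y(v := a))) = cond_site ?\<pi> v Y"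
      by (simp add: cond_site_update)
    with lifted_cond_site_le_alg_site[OF assms feasible_G] \<open>Y' = Y\<close>
    show "rel_pmf (\<le>) (map_pmf (\<lambda>a. Y(v := a)) (bind_pmf (cond_site ?G v Y) (\<lambda>a. cond_site ?\<pi> v (Y(v := a)))))
        (map_pmf (\<lambda>a. Y'(v := a)) (bind_pmf (cond_site ?G v Y') (\<lambda>a. alg_site \<theta> \<mu> v (Y'(v := a)))))"
      by (simp add: pmf.rel_map) (erule pmf.rel_mono_strong, simp add: le_fun_def)
  qed
  show ?thesis
    unfolding gd_step_eq_site_update alg_step_eq_site_update bind_site_update
    by (rule rel_pmf_bindI[where R = "(=)"]) (simp_all add: pmf.rel_eq site)
qed

lemma contr_set_pmf_alg_law:
  assumes "0 < \<theta>" "\<theta> < 1" "(\<lambda>_. True) \<in> set_pmf \<mu>" "X \<in> set_pmf (alg_law \<theta> \<mu> T2 t)"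
  shows "contr X \<in> set_pmf \<mu>"
  using assms(4)
proof (induction t arbitrary: X)
  case 0
  then show ?case
    using assms(1-3) by (simp add: set_pmf_lift)
next
  case (Suc t)
  then obtain X' where "X' \<in> set_pmf (alg_law \<theta> \<mu> T2 t)" "X \<in> set_pmf (alg_kernel \<theta> \<mu> T2 t X')"
    unfolding alg_law_Suc by auto
  then show ?case
    using Suc.IH contr_set_pmf_alg_kernel[OF assms(1,2)] by blast
qed

lemma bind_lift_alg_kernel:
  assumes "0 < \<theta>" "\<theta> < 1"
  shows "bind_pmf (bind_pmf Z (lift \<theta>)) (alg_kernel \<theta> \<mu> T2 t) = bind_pmf (bind_pmf Z (lift \<theta>)) (alg_step \<theta> \<mu>)"
proof -
  have "bind_pmf (lift \<theta> z) (alg_refresh \<theta>) = bind_pmf (lift \<theta> z) (\<lambda>_. lift \<theta> z)" for z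
    using assms by (intro bind_pmf_cong) (simp_all add: alg_refresh_def set_pmf_lift)
  then have refresh: "bind_pmf (lift \<theta> z) (alg_refresh \<theta>) = lift \<theta> z" for z
    by simp
  have G_refresh: "bind_pmf (bind_pmf Z (lift \<theta>)) (alg_refresh \<theta>) = bind_pmf Z (lift \<theta>)"
    by (simp only: bind_assoc_pmf refresh)
  show ?thesis
  proof (cases "t mod T2 = 0")
    case True
    then have "bind_pmf (bind_pmf Z (lift \<theta>)) (alg_kernel \<theta> \<mu> T2 t)
        = bind_pmf (bind_pmf (bind_pmf Z (lift \<theta>)) (alg_refresh \<theta>)) (alg_step \<theta> \<mu>)"
      by (simp add: alg_kernel_def[abs_def] bind_assoc_pmf)
    then show ?thesis
      by (simp only: G_refresh)
  next
    case False
    then show ?thesis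
      by (simp add: alg_kernel_def[abs_def])
  qed
qed

lemma lifted_gd_law_le_alg_law:
  fixes \<mu> :: "('v::finite \<Rightarrow> bool) pmf"
  assumes "monotone_system \<mu>" "0 < \<theta>" "\<theta> < 1" "(\<lambda>_. True) \<in> set_pmf \<mu>"
  shows "rel_pmf (\<le>) (gd_law (lifted \<theta> \<mu>) (lift \<theta> (\<lambda>_. True)) t) (alg_law \<theta> \<mu> T2 t)"
proof (induction t)
  case 0
  show ?case
    by (simp add: rel_pmf_reflI)
next
  case (Suc t)
  let ?Z = "gd_law \<mu> (return_pmf (\<lambda>_. True)) t"
  let ?G = "bind_pmf ?Z (lift \<theta>)" and ?A = "alg_law \<theta> \<mu> T2 t"
  have G: "gd_law (lifted \<theta> \<mu>) (lift \<theta> (\<lambda>_. True)) t = ?G"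
    by (rule gd_law_lifted[OF assms(2-4)])
  have "rel_pmf (\<le>) (bind_pmf ?G (gd_step (lifted \<theta> \<mu>))) (bind_pmf ?G (alg_step \<theta> \<mu>))"
    by (rule lifted_gd_step_le_alg_step[OF assms(2,3) increasing_density_gd_law[OF assms(1,4)]])
  also have "bind_pmf ?G (alg_step \<theta> \<mu>) = bind_pmf ?G (alg_kernel \<theta> \<mu> T2 t)"
    by (rule bind_lift_alg_kernel[OF assms(2,3), symmetric])
  finally have "rel_pmf (\<le>) (bind_pmf ?G (gd_step (lifted \<theta> \<mu>))) (bind_pmf ?G (alg_kernel \<theta> \<mu> T2 t))" .
  moreover have "rel_pmf (\<le>) (bind_pmf ?G (alg_kernel \<theta> \<mu> T2 t)) (bind_pmf ?A (alg_kernel \<theta> \<mu> T2 t))"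
  proof (rule rel_pmf_bind_mono_on[where S = "\<lambda>X. contr X \<in> set_pmf \<mu>"])
    show "rel_pmf (\<le>) ?G ?A"
      using Suc G by simp
    show "\<forall>X\<in>set_pmf ?G. contr X \<in> set_pmf \<mu>"
      using set_pmf_gd_law[OF assms(4), of t] lift_contr_of_set_pmf[OF assms(2,3)] by blast
    show "\<forall>X\<in>set_pmf ?A. contr X \<in> set_pmf \<mu>"
      using contr_set_pmf_alg_law[OF assms(2-4)] by blast
  qed (rule alg_kernel_mono[OF assms(1-3)])
  ultimately show ?case
    unfolding alg_law_Suc gd_law.simps G by (rule rel_pmf_le_trans)
qed

theorem lemma3p3:
  fixes \<mu> :: "('v::finite \<Rightarrow> bool) pmf" and \<theta> :: real and T1 T2 t :: nat
  assumes "monotone_system \<mu>"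
    and "0 < \<theta>" and "\<theta> < 1"
    and "1 \<le> T1" and "1 \<le> T2"
    and "pmf \<mu> (\<lambda>_. True) > 0"
    and "t \<le> T1 * T2"
  shows "rel_pmf (\<le>) (gd_law (lifted \<theta> \<mu>) (lift \<theta> (\<lambda>_. True)) t) (alg_law \<theta> \<mu> T2 t)"
proof -
  \<comment> \<open>The domination holds at every time t.\<close>
  have "(\<lambda>_. True) \<in> set_pmf \<mu>"
    using assms(6) by (simp add: set_pmf_iff)
  then show ?thesis
    by (rule lifted_gd_law_le_alg_law[OF assms(1-3)])
qed

end
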